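(* Let $\delta\ge 2$, $n\ge 8\delta-7$ and $s$ be integers with $\delta+1\le s\le n/2$. Then $$\rho_{\mathcal D}\big(K_s\vee(K_{n-2s+1}\cup(s-1)K_1)\big)\ >\ \rho_{\mathcal D}\big(K_\delta\vee(K_{n-2\delta+1}\cup(\delta-1)K_1)\big).$$
   Context: For a connected graph $G$, $\mathcal D(G)$ is its distance matrix (entry $(i,j)$ is the distance between the $i$-th and $j$-th vertices) and $\rho_{\mathcal D}(G)$ its largest eigenvalue. $K_m$ is the complete graph on $m$ vertices, $tK_1$ the edgeless graph on $t$ vertices, $\cup$ disjoint union, and $\vee$ the join. *)

theory Defs
  imports "Jordan_Normal_Form.Char_Poly"
begin

text \<open>A finite simple graph on the vertex set {0..<n}, given by its order and a
  (symmetric, irreflexive) adjacency relation.\<close>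
type_synonym graph = "nat \<times> (nat \<Rightarrow> nat \<Rightarrow> bool)"

definition gorder :: "graph \<Rightarrow> nat" where "gorder G = fst G"
definition gadj :: "graph \<Rightarrow> nat \<Rightarrow> nat \<Rightarrow> bool" where "gadj G = snd G"

definition complete_graph :: "nat \<Rightarrow> graph" where
  "complete_graph m = (m, \<lambda>i j. i \<noteq> j)"

definition edgeless_graph :: "nat \<Rightarrow> graph" where
  "edgeless_graph t = (t, \<lambda>i j. False)"

definition graph_union :: "graph \<Rightarrow> graph \<Rightarrow> graph" where
  "graph_union G H = (gorder G + gorder H,
     \<lambda>i j. if i < gorder G \<and> j < gorder G then gadj G i j
           else if gorder G \<le> i \<and> gorder G \<le> j then gadj H (i - gorder G) (j - gorder G)
           else False)"

definition graph_join :: "graph \<Rightarrow> graph \<Rightarrow> graph" where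
  "graph_join G H = (gorder G + gorder H,
     \<lambda>i j. if i < gorder G \<and> j < gorder G then gadj G i j
           else if gorder G \<le> i \<and> gorder G \<le> j then gadj H (i - gorder G) (j - gorder G)
           else True)"

fun walk_len :: "graph \<Rightarrow> nat \<Rightarrow> nat \<Rightarrow> nat \<Rightarrow> bool" where
  "walk_len G 0 i j = (i = j)"
| "walk_len G (Suc k) i j = (\<exists>m < gorder G. gadj G i m \<and> walk_len G k m j)"

definition graph_dist :: "graph \<Rightarrow> nat \<Rightarrow> nat \<Rightarrow> nat" where
  "graph_dist G i j = (LEAST k. walk_len G k i j)"

definition distance_matrix :: "graph \<Rightarrow> real mat" where
  "distance_matrix G = mat (gorder G) (gorder G) (\<lambda>(i, j). real (graph_dist G i j))"

definition distance_spectral_radius :: "graph \<Rightarrow> real" where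
  "distance_spectral_radius G = Max {k. eigenvalue (distance_matrix G) k}"

definition connected_graph :: "graph \<Rightarrow> bool" where
  "connected_graph G = (\<forall>i < gorder G. \<forall>j < gorder G. \<exists>k. walk_len G k i j)"

end

theory Submission
  imports Defs "Jordan_Normal_Form.Spectral_Radius"
begin

text \<open>Write \<open>G\<^sub>s = K\<^sub>s \<or> (K\<^sub>t \<union> (s - 1)K\<^sub>1)\<close> with \<open>t = n - 2s + 1\<close>.
  Two distinct vertices of \<open>G\<^sub>s\<close> are at distance 2 if both lie outside \<open>K\<^sub>s\<close> and one of
  them is isolated in \<open>K\<^sub>t \<union> (s - 1)K\<^sub>1\<close>, and at distance 1 otherwise. The three parts
  therefore form an equitable partition of the distance matrix: every eigenvalue other
  than \<open>-1\<close> and \<open>-2\<close> is a root of the characteristic polynomial \<open>\<phi>\<^sub>s\<close> of the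
  \<open>3 \<times> 3\<close> quotient matrix, every root above \<open>-1\<close> is an eigenvalue, and hence
  \<open>\<rho>\<^sub>D(G\<^sub>s)\<close> is the largest root of \<open>\<phi>\<^sub>s\<close>.
  Now \<open>\<phi>\<^sub>s(n + s/4) < 0\<close> gives \<open>\<rho>\<^sub>D(G\<^sub>s) > n + s/4\<close>, while \<open>\<phi>\<^sub>\<delta> - \<phi>\<^sub>s = (s - \<delta>) q\<close>
  for a quadratic \<open>q\<close> that is positive from \<open>n + s/4\<close> on as soon as \<open>n \<ge> 8\<delta> - 7\<close>.
  So if \<open>\<rho>\<^sub>D(G\<^sub>\<delta>) \<ge> n + s/4\<close>, then \<open>\<phi>\<^sub>s(\<rho>\<^sub>D(G\<^sub>\<delta>)) < 0\<close> and \<open>\<phi>\<^sub>s\<close> has a larger root.\<close>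

lemma graph_dist_self: "graph_dist G i i = 0"
  unfolding graph_dist_def by simp

lemma graph_dist_adjacent:
  assumes "i \<noteq> j" "j < gorder G" "gadj G i j"
  shows "graph_dist G i j = 1"
  unfolding graph_dist_def
proof (rule Least_equality)
  show "walk_len G 1 i j" using assms by simp
  show "1 \<le> k" if "walk_len G k i j" for k
    using that assms(1) by (cases k) auto
qed

lemma graph_dist_common_neighbour:
  assumes "i \<noteq> j" "\<not> gadj G i j" "m < gorder G" "j < gorder G" "gadj G i m" "gadj G m j"
  shows "graph_dist G i j = 2"
  unfolding graph_dist_def
proof (rule Least_equality)
  show "walk_len G 2 i j" using assms by (auto simp: numeral_2_eq_2)
  show "2 \<le> k" if "walk_len G k i j" for k
  proof (rule ccontr)
    assume "\<not> 2 \<le> k"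
    then have "k = 0 \<or> k = 1" by auto
    then show False using that assms(1,2) by auto
  qed
qed

lemma distance_matrix_carrier: "distance_matrix G \<in> carrier_mat (gorder G) (gorder G)"
  by (simp add: distance_matrix_def)

definition block_mat :: "nat \<Rightarrow> (nat \<Rightarrow> 'b) \<Rightarrow> ('b \<Rightarrow> 'b \<Rightarrow> 'a :: zero) \<Rightarrow> 'a mat" where
  "block_mat n p W = mat n n (\<lambda>(i, j). if i = j then 0 else W (p i) (p j))"

lemma block_mat_mult_vec:
  fixes W :: "'b \<Rightarrow> 'b \<Rightarrow> 'a :: comm_ring"
  assumes "v \<in> carrier_vec n" "i < n"
  shows "(block_mat n p W *\<^sub>v v) $ i = (\<Sum>j<n. W (p i) (p j) * v $ j) - W (p i) (p i) * v $ i"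
proof -
  have "(block_mat n p W *\<^sub>v v) $ i = (\<Sum>j<n. (if i = j then 0 else W (p i) (p j)) * v $ j)"
    using assms by (simp add: block_mat_def scalar_prod_def lessThan_atLeast0)
  also have "\<dots> = (\<Sum>j<n. W (p i) (p j) * v $ j - (if j = i then W (p i) (p i) * v $ i else 0))"
    by (intro sum.cong) auto
  also have "\<dots> = (\<Sum>j<n. W (p i) (p j) * v $ j) - W (p i) (p i) * v $ i"
    using assms(2) by (simp add: sum_subtractf)
  finally show ?thesis .
qed

definition clique_join_graph :: "nat \<Rightarrow> nat \<Rightarrow> graph" where
  "clique_join_graph s n = graph_join (complete_graph s)
     (graph_union (complete_graph (n - 2 * s + 1)) (edgeless_graph (s - 1)))"

text \<open>Blocks 0, 1, 2 are the vertex sets of \<open>K\<^sub>s\<close>, \<open>K\<^bsub>n-2s+1\<^esub>\<close> and \<open>(s - 1)K\<^sub>1\<close>.\<close>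

definition clique_join_block :: "nat \<Rightarrow> nat \<Rightarrow> nat \<Rightarrow> nat" where
  "clique_join_block s n j = (if j < s then 0 else if j < n - s + 1 then 1 else 2)"

definition block_dist :: "nat \<Rightarrow> nat \<Rightarrow> real" where
  "block_dist k l = (if 0 < k \<and> 0 < l \<and> (k = 2 \<or> l = 2) then 2 else 1)"

lemma block_dist_diag: "block_dist k k = (if k = 2 then 2 else 1)"
  by (simp add: block_dist_def)

lemma clique_join_block_less_3: "clique_join_block s n j < 3"
  by (simp add: clique_join_block_def)

lemma gorder_clique_join_graph:
  "1 \<le> s \<Longrightarrow> 2 * s \<le> n \<Longrightarrow> gorder (clique_join_graph s n) = n"
  by (simp add: clique_join_graph_def graph_join_def graph_union_def complete_graph_def
      edgeless_graph_def gorder_def)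

lemma gadj_clique_join_graph:
  assumes "2 * s \<le> n"
  shows "gadj (clique_join_graph s n) i j =
    (if i < s \<and> j < s then i \<noteq> j
     else if s \<le> i \<and> s \<le> j then i \<noteq> j \<and> i < n - s + 1 \<and> j < n - s + 1 else True)"
  using assms
  by (auto simp: clique_join_graph_def graph_join_def graph_union_def complete_graph_def
      edgeless_graph_def gorder_def gadj_def)

lemma graph_dist_clique_join_graph:
  assumes "1 \<le> s" "2 * s \<le> n" "i < n" "j < n" "i \<noteq> j"
  shows "graph_dist (clique_join_graph s n) i j =
    block_dist (clique_join_block s n i) (clique_join_block s n j)"
proof (cases "gadj (clique_join_graph s n) i j")
  case True
  then show ?thesis
    using assms graph_dist_adjacent[OF \<open>i \<noteq> j\<close> _ True]
    by (auto simp: gorder_clique_join_graph gadj_clique_join_graph clique_join_block_def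
        block_dist_def split: if_splits)
next
  case False
  have "gadj (clique_join_graph s n) i 0" "gadj (clique_join_graph s n) 0 j"
    using False assms by (auto simp: gadj_clique_join_graph split: if_splits)
  with False show ?thesis
    using assms graph_dist_common_neighbour[OF \<open>i \<noteq> j\<close> False, of 0]
    by (auto simp: gorder_clique_join_graph gadj_clique_join_graph clique_join_block_def
        block_dist_def split: if_splits)
qed

lemma distance_matrix_clique_join_graph:
  assumes "1 \<le> s" "2 * s \<le> n"
  shows "distance_matrix (clique_join_graph s n) = block_mat n (clique_join_block s n) block_dist"
  using assms
  by (intro eq_matI) (auto simp: distance_matrix_def block_mat_def gorder_clique_join_graph
      graph_dist_self graph_dist_clique_join_graph)

lemma sum_clique_join_blocks:
  fixes f :: "nat \<Rightarrow> real"
  assumes "1 \<le> s" "2 * s \<le> n"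
  shows "(\<Sum>j<n. f (clique_join_block s n j)) =
    real s * f 0 + (real n - 2 * real s + 1) * f 1 + (real s - 1) * f 2"
proof -
  let ?b = "clique_join_block s n"
  have split: "{..<n} = {..<s} \<union> {s..<n - s + 1} \<union> {n - s + 1..<n}"
    using assms by auto
  have "(\<Sum>j<n. f (?b j)) =
      (\<Sum>j\<in>{..<s} \<union> {s..<n - s + 1}. f (?b j)) + (\<Sum>j\<in>{n - s + 1..<n}. f (?b j))"
    unfolding split using assms by (intro sum.union_disjoint) auto
  also have "(\<Sum>j\<in>{..<s} \<union> {s..<n - s + 1}. f (?b j)) =
      (\<Sum>j<s. f (?b j)) + (\<Sum>j\<in>{s..<n - s + 1}. f (?b j))"
    by (rule sum.union_disjoint) auto
  also have "(\<Sum>j<s. f (?b j)) = (\<Sum>j<s. f 0)"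
    by (intro sum.cong) (auto simp: clique_join_block_def)
  also have "(\<Sum>j\<in>{s..<n - s + 1}. f (?b j)) = (\<Sum>j\<in>{s..<n - s + 1}. f 1)"
    by (intro sum.cong) (auto simp: clique_join_block_def)
  also have "(\<Sum>j\<in>{n - s + 1..<n}. f (?b j)) = (\<Sum>j\<in>{n - s + 1..<n}. f 2)"
    using assms by (intro sum.cong) (auto simp: clique_join_block_def)
  finally show ?thesis
    using assms by (simp add: of_nat_diff)
qed

definition quotient_mult :: "real \<Rightarrow> real \<Rightarrow> (nat \<Rightarrow> real) \<Rightarrow> nat \<Rightarrow> real" where
  "quotient_mult s n c k = s * block_dist k 0 * c 0 + (n - 2 * s + 1) * block_dist k 1 * c 1
     + (s - 1) * block_dist k 2 * c 2 - block_dist k k * c k"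

lemma distance_matrix_clique_join_graph_mult_block_vec:
  assumes "1 \<le> s" "2 * s \<le> n" "i < n"
  shows "(distance_matrix (clique_join_graph s n) *\<^sub>v vec n (\<lambda>j. c (clique_join_block s n j))) $ i =
    quotient_mult s n c (clique_join_block s n i)"
proof -
  let ?b = "clique_join_block s n"
  have "(distance_matrix (clique_join_graph s n) *\<^sub>v vec n (\<lambda>j. c (?b j))) $ i =
      (\<Sum>j<n. block_dist (?b i) (?b j) * c (?b j)) - block_dist (?b i) (?b i) * c (?b i)"
    using assms by (simp add: distance_matrix_clique_join_graph block_mat_mult_vec)
  also have "\<dots> = quotient_mult s n c (?b i)"
    using sum_clique_join_blocks[OF assms(1,2), of "\<lambda>l. block_dist (?b i) l * c l"]
    by (simp add: quotient_mult_def)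
  finally show ?thesis .
qed

text \<open>The characteristic polynomial \<open>det (x I - Q)\<close> of the quotient matrix
  \<open>Q = [[s - 1, t, s - 1], [s, t - 1, 2s - 2], [s, 2t, 2s - 4]]\<close>, \<open>t = n - 2s + 1\<close>,
  which is the matrix of \<open>quotient_mult s n\<close> acting on \<open>(c 0, c 1, c 2)\<close>.\<close>

definition quotient_char_poly :: "real \<Rightarrow> real \<Rightarrow> real poly" where
  "quotient_char_poly s n = [: n * s^2 - 3 * n * s - 2 * s^3 + 8 * s^2 - 8 * s + 4,
      - 2 * n * s - n + 5 * s^2 - 8 * s + 8, 5 - n - s, 1 :]"

lemma lead_coeff_quotient_char_poly: "lead_coeff (quotient_char_poly s n) = 1"
  by (simp add: quotient_char_poly_def)

lemma poly_quotient_char_poly: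
  "poly (quotient_char_poly s n) x = x^3 - (n + s - 5) * x^2
     + (- 2 * n * s - n + 5 * s^2 - 8 * s + 8) * x + (n * s^2 - 3 * n * s - 2 * s^3 + 8 * s^2 - 8 * s + 4)"
  by (simp add: quotient_char_poly_def power2_eq_square power3_eq_cube algebra_simps)

lemma quotient_eigen_eq_imp_root:
  assumes eq: "\<And>k. k < 3 \<Longrightarrow> quotient_mult s n c k = x * c k" and nonzero: "\<exists>k<3. c k \<noteq> 0"
  shows "poly (quotient_char_poly s n) x = 0"
proof -
  define t where "t = n - 2 * s + 1"
  define E where "E k = x * c k - quotient_mult s n c k" for k
  have E: "E 0 = 0" "E 1 = 0" "E 2 = 0"
    using eq by (simp_all add: E_def)
  let ?F = "poly (quotient_char_poly s n) x"
  \<comment> \<open>The coefficients are the rows of the adjugate of \<open>x I - Q\<close>.\<close>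
  have "?F * c 0 = (- 2 * s * t - 2 * s * x - 2 * s - t * x + x^2 + 5 * x + 4) * E 0
      + (t * x + 2 * t) * E 1 + (s * t + s * x + s - t - x - 1) * E 2"
    unfolding E_def quotient_mult_def poly_quotient_char_poly block_dist_def t_def
    by (simp add: power2_eq_square power3_eq_cube algebra_simps)
  moreover have "?F * c 1 = (s * x + 2 * s) * E 0 + (s^2 - 3 * s * x - 5 * s + x^2 + 5 * x + 4) * E 1
      + (- (s^2) + 2 * s * x + 3 * s - 2 * x - 2) * E 2"
    unfolding E_def quotient_mult_def poly_quotient_char_poly block_dist_def t_def
    by (simp add: power2_eq_square power3_eq_cube algebra_simps)
  moreover have "?F * c 2 = (s * t + s * x + s) * E 0 + (- s * t + 2 * t * x + 2 * t) * E 1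
      + (- s * x - s - t * x - t + x^2 + 2 * x + 1) * E 2"
    unfolding E_def quotient_mult_def poly_quotient_char_poly block_dist_def t_def
    by (simp add: power2_eq_square power3_eq_cube algebra_simps)
  ultimately have "?F * c 0 = 0" "?F * c 1 = 0" "?F * c 2 = 0"
    using E by simp_all
  moreover obtain k where "k < 3" "c k \<noteq> 0"
    using nonzero by blast
  then have "k = 0 \<or> k = 1 \<or> k = 2" by auto
  ultimately show ?thesis
    using \<open>c k \<noteq> 0\<close> by auto
qed

lemma quotient_root_imp_eigen_eq:
  assumes "poly (quotient_char_poly s n) x = 0" "-1 < x" "2 * s \<le> n"
  obtains c :: "nat \<Rightarrow> real"
  where "\<And>k. k < 3 \<Longrightarrow> quotient_mult s n c k = x * c k" and "0 < c 2"
proof -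
  define t where "t = n - 2 * s + 1"
  define K where "K = (x + 3 - s) * (x + 1) - t * (s - 1)"
  \<comment> \<open>\<open>c = adj (x I - Q) (1, 1, 1)\<close>, so that \<open>(x I - Q) c = det (x I - Q) (1, 1, 1)\<close>.\<close>
  define c :: "nat \<Rightarrow> real" where "c k = (if k = 0 then K else if k = 1 then K + (s - 1) * (x + 1 + t)
      else (x + 1) * (x + 1 + t))" for k
  have residual: "quotient_mult s n c k = x * c k - poly (quotient_char_poly s n) x" if "k < 3" for k
  proof -
    have "k = 0 \<or> k = 1 \<or> k = 2" using that by auto
    then show ?thesis
      unfolding quotient_mult_def poly_quotient_char_poly c_def K_def t_def block_dist_def
      by (elim disjE) (simp_all add: power2_eq_square power3_eq_cube algebra_simps)
  qed
  show ?thesis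
  proof (rule that)
    show "quotient_mult s n c k = x * c k" if "k < 3" for k
      using residual[OF that] assms(1) by simp
    show "0 < c 2"
      using assms(2,3) by (simp add: c_def t_def)
  qed
qed

lemma eigenvalue_clique_join_graph_cases:
  assumes "1 \<le> s" "2 * s \<le> n" and ev: "eigenvalue (distance_matrix (clique_join_graph s n)) x"
  shows "x = -1 \<or> x = -2 \<or> poly (quotient_char_poly s n) x = 0"
proof (rule ccontr)
  let ?D = "distance_matrix (clique_join_graph s n)" and ?b = "clique_join_block s n"
  assume "\<not> ?thesis"
  then have diag: "x + block_dist k k \<noteq> 0" for k
    by (auto simp: block_dist_diag)
  from \<open>\<not> ?thesis\<close> have not_root: "poly (quotient_char_poly s n) x \<noteq> 0"
    by simp
  obtain v where v: "v \<in> carrier_vec n" "v \<noteq> 0\<^sub>v n" "?D *\<^sub>v v = x \<cdot>\<^sub>v v"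
    using ev assms by (auto simp: eigenvalue_def eigenvector_def distance_matrix_def
        gorder_clique_join_graph)
  define R where "R k = (\<Sum>j<n. block_dist k (?b j) * v $ j)" for k
  define c where "c k = R k / (x + block_dist k k)" for k
  have v_block: "v $ i = c (?b i)" if "i < n" for i
  proof -
    have "(?D *\<^sub>v v) $ i = x * v $ i"
      using v(1,3) that by (simp add: carrier_vecD)
    moreover have "(?D *\<^sub>v v) $ i = R (?b i) - block_dist (?b i) (?b i) * v $ i"
      unfolding distance_matrix_clique_join_graph[OF assms(1,2)] R_def
      by (rule block_mat_mult_vec[OF v(1) that])
    ultimately have "R (?b i) - block_dist (?b i) (?b i) * v $ i = x * v $ i"
      by simp
    then show ?thesis
      using diag[of "?b i"] by (simp add: c_def field_simps)
  qed
  have "quotient_mult s n c k = x * c k" for k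
  proof -
    have "(x + block_dist k k) * c k = R k"
      using diag[of k] by (simp add: c_def)
    also have "R k = (\<Sum>j<n. block_dist k (?b j) * c (?b j))"
      unfolding R_def by (intro sum.cong) (simp_all add: v_block)
    also have "\<dots> = quotient_mult s n c k + block_dist k k * c k"
      using sum_clique_join_blocks[OF assms(1,2), of "\<lambda>l. block_dist k l * c l"]
      by (simp add: quotient_mult_def)
    finally show ?thesis by (simp add: algebra_simps)
  qed
  with not_root quotient_eigen_eq_imp_root have "c k = 0" if "k < 3" for k
    using that by blast
  then have "v = 0\<^sub>v n"
    using v(1) v_block clique_join_block_less_3 by (intro eq_vecI) auto
  with v(2) show False ..
qed

lemma eigenvalue_clique_join_graph_if_root:
  assumes "2 \<le> s" "2 * s \<le> n" "poly (quotient_char_poly s n) x = 0" "-1 < x"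
  shows "eigenvalue (distance_matrix (clique_join_graph s n)) x"
proof -
  let ?D = "distance_matrix (clique_join_graph s n)" and ?b = "clique_join_block s n"
  have "2 * real s \<le> real n" using assms(2) by simp
  then obtain c where eq: "\<And>k. k < 3 \<Longrightarrow> quotient_mult s n c k = x * c k" and "0 < c 2"
    using quotient_root_imp_eigen_eq assms(3,4) by blast
  define v where "v = vec n (\<lambda>j. c (?b j))"
  have "?b (n - 1) = 2"
    using assms unfolding clique_join_block_def by auto
  then have "v $ (n - 1) = c 2"
    using assms by (simp add: v_def)
  then have "v \<noteq> 0\<^sub>v n"
    using \<open>0 < c 2\<close> assms by auto
  moreover have D: "?D \<in> carrier_mat n n"
    using distance_matrix_carrier[of "clique_join_graph s n"] assms
    by (simp add: gorder_clique_join_graph)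
  moreover have "(?D *\<^sub>v v) $ i = (x \<cdot>\<^sub>v v) $ i" if "i < n" for i
  proof -
    have "(?D *\<^sub>v v) $ i = quotient_mult s n c (?b i)"
      unfolding v_def using assms that by (intro distance_matrix_clique_join_graph_mult_block_vec) auto
    also have "\<dots> = x * c (?b i)"
      using eq clique_join_block_less_3 by blast
    finally show ?thesis
      using that by (simp add: v_def)
  qed
  then have "?D *\<^sub>v v = x \<cdot>\<^sub>v v"
    using D by (intro eq_vecI) (auto simp: v_def)
  ultimately show ?thesis
    unfolding eigenvalue_def eigenvector_def by (intro exI[of _ v]) (auto simp: v_def)
qed

lemma poly_root_above:
  fixes p :: "real poly"
  assumes "0 < lead_coeff p" "poly p a < 0"
  obtains x where "a < x" "poly p x = 0"
proof -
  obtain N where N: "\<And>x. N \<le> x \<Longrightarrow> lead_coeff p \<le> poly p x"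
    using poly_pinfty_gt_lc[OF assms(1)] by blast
  have "0 < poly p (max N (a + 1))"
    using N[of "max N (a + 1)"] assms(1) by simp
  moreover have "a < max N (a + 1)" by simp
  ultimately show ?thesis
    using poly_IVT_pos[of a "max N (a + 1)" p] assms(2) that by blast
qed

lemma poly_quotient_char_poly_at_n_minus_1:
  fixes s n :: real
  assumes "2 \<le> s" "2 * s \<le> n"
  shows "poly (quotient_char_poly s n) (n - 1) < 0"
proof -
  define a where "a = n - 2 * s"
  define b where "b = s - 2"
  have ab: "0 \<le> a" "0 \<le> b" using assms by (auto simp: a_def b_def)
  have n: "n = 2 * (2 + b) + a" and s: "s = 2 + b" by (auto simp: a_def b_def)
  have "- poly (quotient_char_poly s n) (n - 1) = 3 * a^2 * b + 3 * a^2 + 6 * a * b^2 + 19 * a * b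
      + 13 * a + 2 * b^3 + 11 * b^2 + 19 * b + 10"
    unfolding poly_quotient_char_poly n s by (simp add: power2_eq_square power3_eq_cube field_simps)
  moreover have "0 \<le> 3 * a^2 * b + 3 * a^2 + 6 * a * b^2 + 19 * a * b + 13 * a + 2 * b^3 + 11 * b^2 + 19 * b"
    using ab by simp
  ultimately show ?thesis by linarith
qed

lemma distance_spectral_radius_clique_join_graph:
  assumes "2 \<le> s" "2 * s \<le> n"
  shows "poly (quotient_char_poly s n) (distance_spectral_radius (clique_join_graph s n)) = 0"
    and "poly (quotient_char_poly s n) x = 0 \<Longrightarrow> x \<le> distance_spectral_radius (clique_join_graph s n)"
proof -
  define S where "S = {k. eigenvalue (distance_matrix (clique_join_graph s n)) k}"
  have \<rho>: "distance_spectral_radius (clique_join_graph s n) = Max S"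
    by (simp add: distance_spectral_radius_def S_def)
  have "finite S"
    using card_finite_spectrum(1)[OF distance_matrix_carrier] by (simp add: S_def spectrum_def)
  have "poly (quotient_char_poly s n) (real n - 1) < 0"
    using poly_quotient_char_poly_at_n_minus_1 assms by simp
  moreover have "0 < lead_coeff (quotient_char_poly s n)"
    by (simp add: lead_coeff_quotient_char_poly)
  ultimately obtain r where r: "real n - 1 < r" "poly (quotient_char_poly s n) r = 0"
    using poly_root_above by blast
  have "r \<in> S"
    using eigenvalue_clique_join_graph_if_root assms r by (simp add: S_def)
  then have "r \<le> Max S" "Max S \<in> S"
    using \<open>finite S\<close> by (auto intro: Max_in)
  moreover have "-1 < r" using r(1) assms by linarith
  ultimately show root: "poly (quotient_char_poly s n) (distance_spectral_radius (clique_join_graph s n)) = 0"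
    using eigenvalue_clique_join_graph_cases[of s n "Max S"] assms by (auto simp: \<rho> S_def)
  show "x \<le> distance_spectral_radius (clique_join_graph s n)"
    if "poly (quotient_char_poly s n) x = 0"
  proof (cases "-1 < x")
    case True
    then have "x \<in> S"
      using eigenvalue_clique_join_graph_if_root assms that by (simp add: S_def)
    then show ?thesis using \<open>finite S\<close> by (simp add: \<rho>)
  next
    case False
    then show ?thesis using \<open>r \<le> Max S\<close> \<open>-1 < r\<close> by (simp add: \<rho>)
  qed
qed

lemma poly_quotient_char_poly_less:
  fixes d s n x :: real
  assumes "2 \<le> d" "d < s" "8 * d \<le> n + 7" "2 * s \<le> n" "n + s / 4 \<le> x"
  shows "poly (quotient_char_poly s n) x < poly (quotient_char_poly d n) x"
proof -
  define q where "q y = y^2 + (2 * n - 5 * (s + d) + 8) * y - n * (s + d) + 3 * n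
      + 2 * (d^2 + d * s + s^2) - 8 * (s + d) + 8" for y
  define L where "L = n + s / 4"
  have diff: "poly (quotient_char_poly d n) x - poly (quotient_char_poly s n) x = (s - d) * q x"
    unfolding poly_quotient_char_poly q_def by (simp add: power2_eq_square power3_eq_cube algebra_simps)
  have "0 < q L"
  proof -
    define a where "a = n - 2 * s"
    have "0 \<le> a" "0 \<le> n + 7 - 8 * d" "0 < s"
      using assms by (auto simp: a_def)
    then have "0 \<le> s * (n + 7 - 8 * d)" "0 \<le> a * (n + 7 - 8 * d)" "0 \<le> s * a"
      by simp_all
    moreover have "16 * q L = 45 / 2 * (s * (n + 7 - 8 * d)) + 12 * (a * (n + 7 - 8 * d))
        + 32 * (d - 2)^2 + 36 * a^2 + 92 * a + 131 / 2 * (s * a) + 197 / 2 * s"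
      unfolding q_def L_def a_def by (simp add: power2_eq_square field_simps)
    moreover have "0 \<le> (d - 2)^2" "0 \<le> a^2" by simp_all
    ultimately show ?thesis
      using \<open>0 \<le> a\<close> \<open>0 < s\<close> by linarith
  qed
  moreover have "q L \<le> q x"
  proof -
    have "q x - q L = (x - L) * (x + L + 2 * n - 5 * (s + d) + 8)"
      unfolding q_def by (simp add: power2_eq_square algebra_simps)
    moreover have "0 \<le> (x - L) * (x + L + 2 * n - 5 * (s + d) + 8)"
      using assms by (intro mult_nonneg_nonneg) (auto simp: L_def)
    ultimately show ?thesis by simp
  qed
  ultimately have "0 < (s - d) * q x"
    using assms(2) by simp
  with diff show ?thesis by simp
qed

lemma poly_quotient_char_poly_at_threshold:
  fixes s n :: nat
  assumes "3 \<le> s" "2 * s \<le> n" "9 \<le> n"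
  shows "poly (quotient_char_poly s n) (n + s / 4) < 0"
proof -
  define a where "a = real n - 2 * real s"
  have "0 \<le> a" using assms(2) by (simp add: a_def)
  have n: "real n = 2 * real s + a" by (simp add: a_def)
  consider "s = 3" | "s = 4" | "5 \<le> s" using assms(1) by linarith
  then show ?thesis
  proof cases
    case 1
    define c where "c = a - 3"
    have "0 \<le> c" using assms 1 by (simp add: c_def a_def)
    have a: "a = c + 3" by (simp add: c_def)
    have "- 64 * poly (quotient_char_poly s n) (n + s / 4) = 272 * c^2 + 3112 * c + 4613"
      unfolding poly_quotient_char_poly n 1 a by (simp add: power2_eq_square power3_eq_cube field_simps)
    with \<open>0 \<le> c\<close> show ?thesis by (smt (verit) zero_le_power2)
  next
    case 2
    define c where "c = a - 1"
    have "0 \<le> c" using assms 2 by (simp add: c_def a_def)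
    have a: "a = c + 1" by (simp add: c_def)
    have "- 64 * poly (quotient_char_poly s n) (n + s / 4) = 448 * c^2 + 4544 * c + 2688"
      unfolding poly_quotient_char_poly n 2 a by (simp add: power2_eq_square power3_eq_cube field_simps)
    with \<open>0 \<le> c\<close> show ?thesis by (smt (verit) zero_le_power2)
  next
    case 3
    define b where "b = real s - 5"
    have "0 \<le> b" using 3 by (simp add: b_def)
    have s: "real s = 5 + b" by (simp add: b_def)
    have "- 64 * poly (quotient_char_poly s n) (n + s / 4) = 176 * a^2 * b + 624 * a^2 + 376 * a * b^2
        + 3296 * a * b + 6568 * a + 99 * b^3 + 1177 * b^2 + 3705 * b + 1219"
      unfolding poly_quotient_char_poly n s by (simp add: power2_eq_square power3_eq_cube field_simps)
    moreover have "0 \<le> 176 * a^2 * b + 624 * a^2 + 376 * a * b^2 + 3296 * a * b + 6568 * a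
        + 99 * b^3 + 1177 * b^2 + 3705 * b"
      using \<open>0 \<le> a\<close> \<open>0 \<le> b\<close> by simp
    ultimately show ?thesis by linarith
  qed
qed

lemma less_distance_spectral_radius_clique_join_graph:
  assumes "2 \<le> s" "2 * s \<le> n" "poly (quotient_char_poly s n) a < 0"
  shows "a < distance_spectral_radius (clique_join_graph s n)"
proof -
  have "0 < lead_coeff (quotient_char_poly s n)"
    by (simp add: lead_coeff_quotient_char_poly)
  then obtain r where "a < r" "poly (quotient_char_poly s n) r = 0"
    using poly_root_above assms(3) by blast
  with distance_spectral_radius_clique_join_graph(2)[OF assms(1,2)] show ?thesis
    by fastforce
qed

theorem mainTheorem6:
  fixes \<delta> n s :: nat
  assumes "\<delta> \<ge> 2" and "n \<ge> 8 * \<delta> - 7"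
    and "\<delta> + 1 \<le> s" and "2 * s \<le> n"
  shows "distance_spectral_radius
           (graph_join (complete_graph s)
              (graph_union (complete_graph (n - 2 * s + 1)) (edgeless_graph (s - 1))))
       > distance_spectral_radius
           (graph_join (complete_graph \<delta>)
              (graph_union (complete_graph (n - 2 * \<delta> + 1)) (edgeless_graph (\<delta> - 1))))"
proof -
  let ?\<rho> = "\<lambda>k. distance_spectral_radius (clique_join_graph k n)"
  have "real n + real s / 4 < ?\<rho> s"
    using assms poly_quotient_char_poly_at_threshold[of s n]
    by (intro less_distance_spectral_radius_clique_join_graph) auto
  have "?\<rho> \<delta> < ?\<rho> s"
  proof (cases "?\<rho> \<delta> < real n + real s / 4")
    case True
    with \<open>real n + real s / 4 < ?\<rho> s\<close> show ?thesis by linarith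
  next
    case False
    have "poly (quotient_char_poly s n) (?\<rho> \<delta>) < poly (quotient_char_poly \<delta> n) (?\<rho> \<delta>)"
      using assms False by (intro poly_quotient_char_poly_less) auto
    also have "\<dots> = 0"
      using assms by (intro distance_spectral_radius_clique_join_graph(1)) auto
    finally show ?thesis
      using assms by (intro less_distance_spectral_radius_clique_join_graph) auto
  qed
  then show ?thesis
    by (simp only: clique_join_graph_def)
qed

end
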